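(* Let $\mathcal{M}_1,\mathcal{M}_2$ be matroids on a finite ground set $E$, let $T$ be independent in both, let $p\in(0,1)$, and let $\Psi(e)$, $e\in T$, be i.i.d. with $\Pr[\Psi(e)=1]=1-p$; define $S=\{e\in T:\Psi(e)=1\}$. Let $i\in\{1,2\}$ and $\bar\imath$ the other index. Let $\tilde E\subseteq\mathrm{span}_i(T)$ and let $\tilde I\subseteq\tilde E$ be independent in $\mathcal{M}_i$ and in $\mathcal{M}_{\bar\imath}/T$. Then for any fixed arrival order of the elements of $\tilde E$, $$\mathbb{E}_\Psi\left[\left|\mathrm{Greedy}(\mathcal{M}_i/S,\ \mathcal{M}_{\bar\imath}/T,\ \tilde E)\right|\right]\ge\frac{1}{1+p}\,p\,|\tilde I|.$$
   Context: $\mathrm{span}_i(T)=\{e\in E:\mathrm{rank}_{\mathcal{M}_i}(T\cup\{e\})=\mathrm{rank}_{\mathcal{M}_i}(T)\}$. For a matroid $\mathcal{M}$ and an independent set $X$, the contraction $\mathcal{M}/X$ has independent sets exactly those $A$ with $A\cap X=\emptyset$ and $A\cup X$ independent in $\mathcal{M}$. $\mathrm{Greedy}(\mathcal{N}_1,\mathcal{N}_2,\tilde E)$ processes the elements of $\tilde E$ in the given order, starting from the empty set, and adds an element whenever the current set together with it is independent in both $\mathcal{N}_1$ and $\mathcal{N}_2$; it returns the resulting set. *)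

theory Defs
  imports "HOL-Probability.Probability"
begin

definition matroid :: "'a set \<Rightarrow> ('a set \<Rightarrow> bool) \<Rightarrow> bool" where
  "matroid E indep \<longleftrightarrow>
     finite E \<and>
     (\<forall>A. indep A \<longrightarrow> A \<subseteq> E) \<and>
     indep {} \<and>
     (\<forall>A B. indep B \<and> A \<subseteq> B \<longrightarrow> indep A) \<and>
     (\<forall>A B. indep A \<and> indep B \<and> card A < card B \<longrightarrow> (\<exists>e\<in>B - A. indep (insert e A)))"

definition mrank :: "('a set \<Rightarrow> bool) \<Rightarrow> 'a set \<Rightarrow> nat" where
  "mrank indep X = Max {card Y | Y. Y \<subseteq> X \<and> indep Y}"

definition mspan :: "'a set \<Rightarrow> ('a set \<Rightarrow> bool) \<Rightarrow> 'a set \<Rightarrow> 'a set" where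
  "mspan E indep T = {e \<in> E. mrank indep (insert e T) = mrank indep T}"

text \<open>Contraction M/X (for X independent in M).\<close>
definition contract :: "('a set \<Rightarrow> bool) \<Rightarrow> 'a set \<Rightarrow> 'a set \<Rightarrow> bool" where
  "contract indep X = (\<lambda>A. A \<inter> X = {} \<and> indep (A \<union> X))"

definition greedy :: "('a set \<Rightarrow> bool) \<Rightarrow> ('a set \<Rightarrow> bool) \<Rightarrow> 'a list \<Rightarrow> 'a set" where
  "greedy N1 N2 xs =
     fold (\<lambda>e I. if N1 (insert e I) \<and> N2 (insert e I) then insert e I else I) xs {}"

end

theory Submission
  imports Defs
begin

text \<open>Induct on the number of arrivals plus \<open>|T|\<close>. If the first arrival \<open>x\<close> is a loop of
  either matroid, greedy skips it and it is not in \<open>I\<close>. Otherwise \<open>x \<notin> T\<close> is spanned by \<open>T\<close>,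
  so it closes a circuit with \<open>T\<close>: some \<open>t \<in> T\<close> has \<open>T - t + x\<close> independent. Condition on
  \<open>t \<in> S\<close>. With probability \<open>1 - p\<close> it is, and contracting \<open>t\<close> costs at most one element
  of \<open>I\<close>. With probability \<open>p\<close> it is not, so \<open>S \<subseteq> T - t\<close> and greedy accepts \<open>x\<close>; contracting
  \<open>x\<close> in both matroids costs at most two elements of \<open>I\<close>. Since \<open>c = p/(1+p)\<close> satisfies
  \<open>c n = (1-p) c (n-1) + p (1 + c (n-2))\<close>, the bound \<open>c |I|\<close> propagates.\<close>

lemma expectation_Pi_pmf_bernoulli_insert:
  fixes F :: "('a \<Rightarrow> bool) \<Rightarrow> real"
  assumes "finite A" "x \<notin> A" "0 \<le> q" "q \<le> 1"
  shows "measure_pmf.expectation (Pi_pmf (insert x A) False (\<lambda>_. bernoulli_pmf q)) F =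
     q * measure_pmf.expectation (Pi_pmf A False (\<lambda>_. bernoulli_pmf q)) (\<lambda>g. F (g(x := True)))
   + (1 - q) * measure_pmf.expectation (Pi_pmf A False (\<lambda>_. bernoulli_pmf q)) (\<lambda>g. F (g(x := False)))"
proof -
  let ?P = "Pi_pmf A False (\<lambda>_. bernoulli_pmf q)"
  have fin: "finite (set_pmf (map_pmf (\<lambda>g. g(x := y)) ?P))" for y
    using assms(1) by (auto simp: set_Pi_pmf intro!: finite_PiE_dflt)
  have split: "Pi_pmf (insert x A) False (\<lambda>_. bernoulli_pmf q) =
      bernoulli_pmf q \<bind> (\<lambda>y. map_pmf (\<lambda>g. g(x := y)) ?P)"
    using assms(1,2) by (simp add: Pi_pmf_insert' map_pmf_def)
  show ?thesis
    unfolding split using assms(3,4) fin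
    by (subst pmf_expectation_bind[of UNIV]) (auto simp: UNIV_bool)
qed

lemma p_div_one_plus_p_step:
  fixes p a b n :: real
  assumes "0 < p" "p < 1" "n \<le> a + 1" "n \<le> b + 2"
  shows "p / (1 + p) * n \<le> (1 - p) * (p / (1 + p) * a) + p * (1 + p / (1 + p) * b)"
proof -
  define c where "c = p / (1 + p)"
  have "c * (1 + p) = p" "0 \<le> c" using assms(1) by (simp_all add: c_def)
  moreover have "(1 - p) * c * n \<le> (1 - p) * c * (a + 1)" "p * c * n \<le> p * c * (b + 2)"
    using assms \<open>0 \<le> c\<close> by (intro mult_left_mono; simp)+
  ultimately have "c * n \<le> (1 - p) * (c * a) + p * (1 + c * b)"
    by (simp add: algebra_simps)
  then show ?thesis by (simp add: c_def)
qed

section \<open>Matroids\<close>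

lemma matroid_indep_finite: "matroid E M \<Longrightarrow> M A \<Longrightarrow> finite A"
  unfolding matroid_def by (meson finite_subset)

lemma matroid_indep_subset: "matroid E M \<Longrightarrow> M B \<Longrightarrow> A \<subseteq> B \<Longrightarrow> M A"
  unfolding matroid_def by blast

lemma matroid_augment:
  "matroid E M \<Longrightarrow> M A \<Longrightarrow> M B \<Longrightarrow> card A < card B \<Longrightarrow> \<exists>e\<in>B - A. M (insert e A)"
  unfolding matroid_def by blast

lemma matroid_augment_to_card:
  assumes m: "matroid E M" and "M I"
  shows "M Y0 \<Longrightarrow> card Y0 \<le> card I \<Longrightarrow> \<exists>Y. Y0 \<subseteq> Y \<and> Y \<subseteq> Y0 \<union> I \<and> M Y \<and> card Y = card I"
proof (induction "card I - card Y0" arbitrary: Y0)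
  case 0
  then show ?case by auto
next
  case (Suc k)
  then have "card Y0 < card I" by simp
  then obtain e where e: "e \<in> I - Y0" "M (insert e Y0)"
    using matroid_augment[OF m Suc.prems(1) \<open>M I\<close>] by blast
  have card_e: "card (insert e Y0) = Suc (card Y0)"
    using e matroid_indep_finite[OF m Suc.prems(1)] by simp
  have "k = card I - card (insert e Y0)" "card (insert e Y0) \<le> card I"
    using Suc.hyps(2) card_e \<open>card Y0 < card I\<close> by simp_all
  then obtain Y where "insert e Y0 \<subseteq> Y" "Y \<subseteq> insert e Y0 \<union> I" "M Y" "card Y = card I"
    using Suc.hyps(1) e(2) by blast
  then show ?case using e by blast
qed

lemma matroid_contract:
  assumes m: "matroid E M" and "M X"
  shows "matroid E (contract M X)"
  unfolding matroid_def
proof (intro conjI allI impI)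
  show "finite E" using m by (simp add: matroid_def)
  show "A \<subseteq> E" if "contract M X A" for A
    using that m unfolding matroid_def contract_def by blast
  show "contract M X {}" using \<open>M X\<close> by (simp add: contract_def)
  show "contract M X A" if "contract M X B \<and> A \<subseteq> B" for A B
    using that matroid_indep_subset[OF m, of "B \<union> X" "A \<union> X"] by (auto simp: contract_def)
  show "\<exists>e\<in>B - A. contract M X (insert e A)"
    if "contract M X A \<and> contract M X B \<and> card A < card B" for A B
  proof -
    have A: "A \<inter> X = {}" "M (A \<union> X)" and B: "B \<inter> X = {}" "M (B \<union> X)"
      using that by (simp_all add: contract_def)
    have "finite (A \<union> X)" "finite (B \<union> X)"
      using matroid_indep_finite[OF m] A(2) B(2) by blast+
    then have "card (A \<union> X) < card (B \<union> X)"
      using that A(1) B(1) by (simp add: card_Un_disjoint)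
    then obtain e where "e \<in> (B \<union> X) - (A \<union> X)" "M (insert e (A \<union> X))"
      using matroid_augment[OF m A(2) B(2)] by blast
    then show ?thesis using A(1) by (auto simp: contract_def)
  qed
qed

lemma contract_contract:
  "A \<inter> B = {} \<Longrightarrow> contract (contract M A) B = contract M (A \<union> B)"
  unfolding contract_def by (auto simp: fun_eq_iff Un_ac)

lemma contract_commute: "contract (contract M A) B = contract (contract M B) A"
  unfolding contract_def by (auto simp: fun_eq_iff Un_ac)

lemma matroid_exchange_singleton:
  assumes m: "matroid E M" and "M I" "M {x}"
  shows "\<exists>J\<subseteq>I. contract M {x} J \<and> card I \<le> Suc (card J)"
proof (cases "I = {}")
  case True
  then show ?thesis using \<open>M {x}\<close> by (auto simp: contract_def)
next
  case False
  then have "card {x} \<le> card I"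
    using matroid_indep_finite[OF m \<open>M I\<close>] by (simp add: Suc_leI card_gt_0_iff)
  then obtain Y where Y: "x \<in> Y" "Y \<subseteq> insert x I" "M Y" "card Y = card I"
    using matroid_augment_to_card[OF m \<open>M I\<close> \<open>M {x}\<close>] by auto
  have "Y - {x} \<union> {x} = Y" using Y(1) by blast
  then have "contract M {x} (Y - {x})" using Y(3) by (simp add: contract_def)
  moreover have "card I = Suc (card (Y - {x}))"
    using card_Suc_Diff1[OF matroid_indep_finite[OF m \<open>M Y\<close>] Y(1)] Y(4) by simp
  moreover have "Y - {x} \<subseteq> I" using Y(2) by blast
  ultimately show ?thesis by (metis order_refl)
qed

lemma matroid_common_exchange_singleton:
  assumes "matroid E M" "matroid E N" "M I" "N I" "M {x}" "N {x}"
  shows "\<exists>J\<subseteq>I. contract M {x} J \<and> contract N {x} J \<and> card I \<le> card J + 2"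
proof -
  obtain K where K: "K \<subseteq> I" "contract M {x} K" "card I \<le> Suc (card K)"
    using matroid_exchange_singleton[OF assms(1,3,5)] by blast
  obtain J where J: "J \<subseteq> K" "contract N {x} J" "card K \<le> Suc (card J)"
    using matroid_exchange_singleton[OF assms(2) matroid_indep_subset[OF assms(2,4) K(1)] assms(6)]
    by blast
  have "contract M {x} J"
    using matroid_indep_subset[OF matroid_contract[OF assms(1,5)] K(2) J(1)] .
  moreover have "card I \<le> card J + 2" using K(3) J(3) by linarith
  ultimately show ?thesis using K(1) J(1,2) by blast
qed

lemma matroid_circuit_exchange:
  assumes m: "matroid E M" and "M T" "M {x}" "\<not> M (insert x T)"
  shows "\<exists>t\<in>T. M (insert x (T - {t}))"
proof -
  obtain J where J: "J \<subseteq> T" "contract M {x} J" "card T \<le> Suc (card J)"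
    using matroid_exchange_singleton[OF m \<open>M T\<close> \<open>M {x}\<close>] by blast
  have "J \<noteq> T" using J(2) \<open>\<not> M (insert x T)\<close> by (auto simp: contract_def)
  then obtain t where t: "t \<in> T" "J \<subseteq> T - {t}" using J(1) by blast
  have fin: "finite T" using matroid_indep_finite[OF m \<open>M T\<close>] .
  have "card (T - {t}) \<le> card J" using t(1) J(3) fin by (simp add: card_Diff_singleton)
  then have "J = T - {t}" using t fin card_mono[OF _ t(2)] by (intro card_subset_eq) auto
  then show ?thesis using J(2) t(1) by (auto simp: contract_def)
qed

text \<open>For independent \<open>T\<close> this is the span of \<open>T\<close>, without reference to the ground set.\<close>
definition indep_span :: "('a set \<Rightarrow> bool) \<Rightarrow> 'a set \<Rightarrow> 'a set" where
  "indep_span M T = T \<union> {e. \<not> M (insert e T)}"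

lemma mrank_indep:
  assumes m: "matroid E M" and "M X"
  shows "mrank M X = card X"
proof -
  have fin: "finite X" using matroid_indep_finite[OF m \<open>M X\<close>] .
  then have "finite {card Y | Y. Y \<subseteq> X \<and> M Y}" by simp
  then show ?thesis
    unfolding mrank_def by (rule Max_eqI) (use fin \<open>M X\<close> in \<open>auto intro: card_mono\<close>)
qed

lemma mspan_subset_indep_span:
  assumes m: "matroid E M" and "M T"
  shows "mspan E M T \<subseteq> indep_span M T"
proof
  fix e assume e: "e \<in> mspan E M T"
  show "e \<in> indep_span M T"
  proof (rule ccontr)
    assume "e \<notin> indep_span M T"
    then have "e \<notin> T" "M (insert e T)" by (auto simp: indep_span_def)
    then have "mrank M (insert e T) = Suc (mrank M T)"
      using mrank_indep[OF m] \<open>M T\<close> matroid_indep_finite[OF m \<open>M T\<close>] by simp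
    then show False using e by (simp add: mspan_def)
  qed
qed

lemma indep_span_contract:
  assumes "t \<in> T"
  shows "indep_span M T \<subseteq> indep_span (contract M {t}) (T - {t})"
proof
  fix e assume "e \<in> indep_span M T"
  moreover have "insert e (T - {t}) \<union> {t} = insert e T" using assms by auto
  ultimately show "e \<in> indep_span (contract M {t}) (T - {t})"
    using assms by (auto simp: indep_span_def contract_def)
qed

lemma indep_span_contract_exchange:
  assumes m: "matroid E M" and "M T" "t \<in> T" "x \<notin> T" "\<not> M (insert x T)"
  shows "indep_span M T \<subseteq> indep_span (contract M {x}) (T - {t})"
proof
  fix e assume e: "e \<in> indep_span M T"
  show "e \<in> indep_span (contract M {x}) (T - {t})"
  proof (rule ccontr)
    assume "e \<notin> indep_span (contract M {x}) (T - {t})"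
    then have ext: "e \<notin> T - {t}" "e \<noteq> x" "M (insert x (insert e (T - {t})))"
      by (auto simp: indep_span_def contract_def)
    show False
    proof (cases "e = t")
      case True
      then have "insert x (insert e (T - {t})) = insert x T" using assms(3) by auto
      then show False using ext(3) assms(5) by simp
    next
      case False
      have "card T < card (insert x (insert e (T - {t})))"
        using False ext assms(3,4) matroid_indep_finite[OF m \<open>M T\<close>]
        by (simp add: card_Diff1_less card_insert_if)
      then obtain z where "z \<in> {x, e}" "z \<notin> T" "M (insert z T)"
        using matroid_augment[OF m \<open>M T\<close> ext(3)] by auto
      then show False using e assms(5) by (auto simp: indep_span_def)
    qed
  qed
qed

section \<open>Greedy\<close>

definition greedy_step :: "('a set \<Rightarrow> bool) \<Rightarrow> ('a set \<Rightarrow> bool) \<Rightarrow> 'a \<Rightarrow> 'a set \<Rightarrow> 'a set" where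
  "greedy_step N1 N2 e I = (if N1 (insert e I) \<and> N2 (insert e I) then insert e I else I)"

lemma greedy_eq_fold: "greedy N1 N2 xs = fold (greedy_step N1 N2) xs {}"
  unfolding greedy_def greedy_step_def[abs_def] by (rule refl)

lemma fold_greedy_step_subset: "fold (greedy_step N1 N2) xs K \<subseteq> K \<union> set xs"
proof (induction xs arbitrary: K)
  case (Cons y ys)
  have "greedy_step N1 N2 y K \<subseteq> insert y K" by (auto simp: greedy_step_def)
  then show ?case using Cons.IH[of "greedy_step N1 N2 y K"] by auto
qed simp

lemma fold_greedy_step_contract:
  "K \<inter> I = {} \<Longrightarrow>
   fold (greedy_step N1 N2) xs (K \<union> I) = fold (greedy_step (contract N1 I) (contract N2 I)) xs K \<union> I"
proof (induction xs arbitrary: K)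
  case (Cons y ys)
  have "greedy_step N1 N2 y (K \<union> I) = greedy_step (contract N1 I) (contract N2 I) y K \<union> I"
       "greedy_step (contract N1 I) (contract N2 I) y K \<inter> I = {}"
    using Cons.prems by (auto simp: greedy_step_def contract_def insert_absorb)
  then show ?case using Cons.IH by simp
qed simp

lemma greedy_subset: "greedy N1 N2 xs \<subseteq> set xs"
  using fold_greedy_step_subset[of N1 N2 xs "{}"] by (simp add: greedy_eq_fold)

lemma greedy_Cons_reject: "\<not> (N1 {x} \<and> N2 {x}) \<Longrightarrow> greedy N1 N2 (x # xs) = greedy N1 N2 xs"
  by (auto simp: greedy_eq_fold greedy_step_def)

lemma greedy_Cons_accept:
  assumes "N1 {x}" "N2 {x}"
  shows "greedy N1 N2 (x # xs) = insert x (greedy (contract N1 {x}) (contract N2 {x}) xs)"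
  using assms fold_greedy_step_contract[of "{}" "{x}" N1 N2 xs]
  by (simp add: greedy_eq_fold greedy_step_def)

section \<open>Expected size of greedy under random contraction\<close>

definition expected_greedy ::
    "real \<Rightarrow> ('a set \<Rightarrow> bool) \<Rightarrow> ('a set \<Rightarrow> bool) \<Rightarrow> 'a set \<Rightarrow> 'a list \<Rightarrow> real" where
  "expected_greedy q M N T xs = measure_pmf.expectation (Pi_pmf T False (\<lambda>_. bernoulli_pmf q))
     (\<lambda>\<Psi>. real (card (greedy (contract M {e \<in> T. \<Psi> e}) N xs)))"

lemma expected_greedy_insert:
  assumes "finite T" "t \<notin> T" "0 \<le> q" "q \<le> 1"
  shows "expected_greedy q M N (insert t T) xs =
    q * expected_greedy q (contract M {t}) N T xs + (1 - q) * expected_greedy q M N T xs"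
proof -
  have "{e \<in> insert t T. (g(t := True)) e} = {t} \<union> {e \<in> T. g e}"
       "{e \<in> insert t T. (g(t := False)) e} = {e \<in> T. g e}" for g
    using assms(2) by auto
  then show ?thesis
    unfolding expected_greedy_def
    using expectation_Pi_pmf_bernoulli_insert[OF assms] assms(2) by (simp add: contract_contract)
qed

lemma expected_greedy_Cons_reject:
  assumes "matroid E M" "\<not> (M {x} \<and> N {x})"
  shows "expected_greedy q M N T (x # xs) = expected_greedy q M N T xs"
proof -
  have "\<not> (contract M S {x} \<and> N {x})" for S
    using assms matroid_indep_subset[OF assms(1), of "{x} \<union> S" "{x}"] by (auto simp: contract_def)
  then show ?thesis by (simp add: expected_greedy_def greedy_Cons_reject)
qed

lemma expected_greedy_Cons_accept:
  assumes "matroid E M" "M (insert x T)" "x \<notin> T" "N {x}" "x \<notin> set xs"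
  shows "expected_greedy q M N T (x # xs) = 1 + expected_greedy q (contract M {x}) (contract N {x}) T xs"
proof -
  let ?P = "Pi_pmf T False (\<lambda>_. bernoulli_pmf q)"
  let ?G = "\<lambda>\<Psi>. greedy (contract (contract M {x}) {e \<in> T. \<Psi> e}) (contract N {x}) xs"
  have "card (greedy (contract M {e \<in> T. \<Psi> e}) N (x # xs)) = Suc (card (?G \<Psi>))" for \<Psi>
  proof -
    have "insert x {e \<in> T. \<Psi> e} \<subseteq> insert x T" by blast
    then have "contract M {e \<in> T. \<Psi> e} {x}"
      using assms(3) matroid_indep_subset[OF assms(1,2)] by (simp add: contract_def)
    then have "greedy (contract M {e \<in> T. \<Psi> e}) N (x # xs) = insert x (?G \<Psi>)"
      using greedy_Cons_accept[of "contract M {e \<in> T. \<Psi> e}" x N xs] assms(4) by (simp add: contract_commute)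
    moreover have "x \<notin> ?G \<Psi>" using greedy_subset assms(5) by fast
    ultimately show ?thesis by (simp add: finite_subset[OF greedy_subset])
  qed
  moreover have "integrable ?P (\<lambda>\<Psi>. real (card (?G \<Psi>)))"
    using matroid_indep_finite[OF assms(1,2)]
    by (intro integrable_measure_pmf_finite) (auto simp: set_Pi_pmf intro!: finite_PiE_dflt)
  ultimately show ?thesis by (simp add: expected_greedy_def)
qed

lemma expected_greedy_Cons_circuit:
  assumes m: "matroid E M" and "M T" "t \<in> T" "M (insert x (T - {t}))" "x \<notin> T" "N {x}"
    and "x \<notin> set xs" "0 \<le> q" "q \<le> 1"
  shows "expected_greedy q M N T (x # xs) =
    q * expected_greedy q (contract M {t}) N (T - {t}) (x # xs)
    + (1 - q) * (1 + expected_greedy q (contract M {x}) (contract N {x}) (T - {t}) xs)"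
proof -
  have "expected_greedy q M N (insert t (T - {t})) (x # xs) =
      q * expected_greedy q (contract M {t}) N (T - {t}) (x # xs)
      + (1 - q) * expected_greedy q M N (T - {t}) (x # xs)"
    using matroid_indep_finite[OF m \<open>M T\<close>] assms(8,9) by (intro expected_greedy_insert) auto
  then show ?thesis
    using expected_greedy_Cons_accept[OF m assms(4)] assms(3,5-7) by (simp add: insert_absorb)
qed

text \<open>The induction invariant; in the theorem \<open>N\<close> is \<open>Mj / T\<close>, so every element of \<open>T\<close> is a loop of \<open>N\<close>.\<close>
definition greedy_setting ::
    "'a set \<Rightarrow> ('a set \<Rightarrow> bool) \<Rightarrow> ('a set \<Rightarrow> bool) \<Rightarrow> 'a set \<Rightarrow> 'a list \<Rightarrow> bool" where
  "greedy_setting E M N T xs \<longleftrightarrow> matroid E M \<and> matroid E N \<and> M T \<and> (\<forall>t\<in>T. \<not> N {t}) \<and>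
     set xs \<subseteq> indep_span M T \<and> distinct xs"

lemma greedy_setting_Cons: "greedy_setting E M N T (x # xs) \<Longrightarrow> greedy_setting E M N T xs"
  by (simp add: greedy_setting_def)

lemma greedy_setting_contract_elem:
  assumes "greedy_setting E M N T xs" "t \<in> T"
  shows "greedy_setting E (contract M {t}) N (T - {t}) xs"
proof -
  have m: "matroid E M" "matroid E N" "M T" and loops: "\<forall>s\<in>T. \<not> N {s}"
    and span: "set xs \<subseteq> indep_span M T" and "distinct xs"
    using assms(1) by (simp_all add: greedy_setting_def)
  have "M {t}" by (rule matroid_indep_subset[OF m(1,3)]) (use assms(2) in blast)
  have "T - {t} \<union> {t} = T" using assms(2) by blast
  then have "contract M {t} (T - {t})" using m(3) by (simp add: contract_def)
  then show ?thesis
    unfolding greedy_setting_def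
    using m(2) loops span indep_span_contract[OF assms(2), of M] \<open>distinct xs\<close>
      matroid_contract[OF m(1) \<open>M {t}\<close>] by auto
qed

lemma greedy_setting_contract_arrival:
  assumes "greedy_setting E M N T (x # xs)" "t \<in> T" "x \<notin> T" "M (insert x (T - {t}))" "N {x}"
  shows "greedy_setting E (contract M {x}) (contract N {x}) (T - {t}) xs"
proof -
  have m: "matroid E M" "matroid E N" "M T" and loops: "\<forall>s\<in>T. \<not> N {s}"
    and span: "set (x # xs) \<subseteq> indep_span M T" and "distinct xs"
    using assms(1) by (simp_all add: greedy_setting_def)
  have "M {x}" by (rule matroid_indep_subset[OF m(1) assms(4)]) blast
  have "\<not> M (insert x T)" using span assms(3) by (simp add: indep_span_def)
  have "\<not> contract N {x} {s}" if "s \<in> T" for s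
  proof
    assume "contract N {x} {s}"
    then have "N ({s} \<union> {x})" by (simp add: contract_def)
    then have "N {s}" by (rule matroid_indep_subset[OF m(2)]) blast
    then show False using loops that by blast
  qed
  moreover have "set xs \<subseteq> indep_span (contract M {x}) (T - {t})"
    using span indep_span_contract_exchange[OF m(1,3) assms(2,3) \<open>\<not> M (insert x T)\<close>] by auto
  moreover have "contract M {x} (T - {t})" using assms(3,4) by (simp add: contract_def)
  ultimately show ?thesis
    unfolding greedy_setting_def
    using matroid_contract[OF m(1) \<open>M {x}\<close>] matroid_contract[OF m(2) assms(5)] \<open>distinct xs\<close>
    by simp
qed

lemma expected_greedy_ge:
  assumes p: "0 < p" "p < 1"
  shows "greedy_setting E M N T xs \<Longrightarrow> I \<subseteq> set xs \<Longrightarrow> M I \<Longrightarrow> N I \<Longrightarrow>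
    p / (1 + p) * card I \<le> expected_greedy (1 - p) M N T xs"
proof (induction "length xs + card T" arbitrary: M N T I xs rule: less_induct)
  case less
  note setting = less.prems(1) and I = less.prems(2-4)
  have mM: "matroid E M" and mN: "matroid E N" and MT: "M T"
    using setting by (simp_all add: greedy_setting_def)
  show ?case
  proof (cases xs)
    case Nil
    then show ?thesis using I(1) by (simp add: expected_greedy_def)
  next
    case (Cons x xs')
    show ?thesis
    proof (cases "M {x} \<and> N {x}")
      case False
      then have "x \<notin> I"
        using matroid_indep_subset[OF mM I(2), of "{x}"] matroid_indep_subset[OF mN I(3), of "{x}"] by blast
      then have "I \<subseteq> set xs'" using I(1) Cons by auto
      then have "p / (1 + p) * card I \<le> expected_greedy (1 - p) M N T xs'"
        using less.hyps[of xs' T M N I] greedy_setting_Cons[of E M N T x xs'] setting I(2,3) Cons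
        by simp
      then show ?thesis using expected_greedy_Cons_reject[of E M x N, OF mM False] Cons by simp
    next
      case True
      have x: "x \<notin> T" "\<not> M (insert x T)"
        using True setting Cons by (auto simp: greedy_setting_def indep_span_def)
      obtain t where t: "t \<in> T" "M (insert x (T - {t}))"
        using matroid_circuit_exchange[OF mM MT _ x(2)] True by blast
      have "M {t}" by (rule matroid_indep_subset[OF mM MT]) (use t(1) in blast)
      then obtain I1 where I1: "I1 \<subseteq> I" "contract M {t} I1" "card I \<le> Suc (card I1)"
        using matroid_exchange_singleton[OF mM I(2)] by blast
      obtain I2 where I2: "I2 \<subseteq> I" "contract M {x} I2" "contract N {x} I2" "card I \<le> card I2 + 2"
        using matroid_common_exchange_singleton[OF mM mN I(2,3)] True by blast
      have card: "card (T - {t}) < card T"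
        using card_Diff1_less[OF matroid_indep_finite[OF mM MT] t(1)] .
      have E1: "p / (1 + p) * card I1 \<le> expected_greedy (1 - p) (contract M {t}) N (T - {t}) xs"
      proof (rule less.hyps)
        show "length xs + card (T - {t}) < length xs + card T" using card by simp
        show "greedy_setting E (contract M {t}) N (T - {t}) xs"
          by (rule greedy_setting_contract_elem[OF setting t(1)])
        show "I1 \<subseteq> set xs" using I1(1) I(1) by blast
        show "N I1" by (rule matroid_indep_subset[OF mN I(3) I1(1)])
      qed (rule I1(2))
      have E0: "p / (1 + p) * card I2 \<le>
          expected_greedy (1 - p) (contract M {x}) (contract N {x}) (T - {t}) xs'"
      proof (rule less.hyps)
        show "length xs' + card (T - {t}) < length xs + card T" using card Cons by simp
        show "greedy_setting E (contract M {x}) (contract N {x}) (T - {t}) xs'"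
          using greedy_setting_contract_arrival[of E M N T x xs' t] setting Cons t x(1) True by simp
        show "I2 \<subseteq> set xs'" using I2(1,2) I(1) Cons by (auto simp: contract_def)
      qed (rule I2(2), rule I2(3))
      have "p / (1 + p) * card I \<le> (1 - p) * (p / (1 + p) * card I1) + p * (1 + p / (1 + p) * card I2)"
        using p_div_one_plus_p_step[OF p] I1(3) I2(4) by simp
      also have "\<dots> \<le> (1 - p) * expected_greedy (1 - p) (contract M {t}) N (T - {t}) xs
          + p * (1 + expected_greedy (1 - p) (contract M {x}) (contract N {x}) (T - {t}) xs')"
        using E1 E0 p by (intro add_mono mult_left_mono) auto
      also have "\<dots> = expected_greedy (1 - p) M N T xs"
        using expected_greedy_Cons_circuit[OF mM MT t(1,2) x(1)] True setting Cons p
        by (simp add: greedy_setting_def)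
      finally show ?thesis .
    qed
  qed
qed

theorem lemma8:
  fixes E :: "'a set" and Mi Mj :: "'a set \<Rightarrow> bool"
    and T Etil Itil :: "'a set" and xs :: "'a list" and p :: real
  assumes "matroid E Mi" and "matroid E Mj"
    and "Mi T" and "Mj T"
    and "0 < p" and "p < 1"
    and "Etil \<subseteq> mspan E Mi T"
    and "Itil \<subseteq> Etil" and "Mi Itil" and "contract Mj T Itil"
    and "distinct xs" and "set xs = Etil"
  shows "measure_pmf.expectation (Pi_pmf T False (\<lambda>_. bernoulli_pmf (1 - p)))
           (\<lambda>\<Psi>. real (card (greedy (contract Mi {e \<in> T. \<Psi> e}) (contract Mj T) xs)))
         \<ge> 1 / (1 + p) * p * real (card Itil)"
proof -
  have "set xs \<subseteq> indep_span Mi T"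
    using mspan_subset_indep_span[OF assms(1,3)] assms(7,12) by blast
  then have "greedy_setting E Mi (contract Mj T) T xs"
    using assms(1,3,11) matroid_contract[OF assms(2,4)] by (simp add: greedy_setting_def contract_def)
  then have "p / (1 + p) * card Itil \<le> expected_greedy (1 - p) Mi (contract Mj T) T xs"
    using expected_greedy_ge[OF assms(5,6)] assms(8-10,12) by blast
  then show ?thesis by (simp add: expected_greedy_def)
qed

end
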